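(* For every $\lambda$ and all $(x,p)$ with pairwise distinct $x_i$, $$\mathbf{e}^T(\lambda-L)^\vee\mathbf{e}=\operatorname{tr}\big((\lambda-L)^\vee\big)=\Delta'(\lambda),$$ and moreover $\{\operatorname{tr}L,\mathcal{G}(\lambda)\}_0=\{\operatorname{tr}L,\mathcal{E}(\lambda)\}_0=\Delta'(\lambda)$, where $\mathcal{G}(\lambda)=\operatorname{tr}(X(\lambda-L)^\vee)$ and $\mathcal{E}(\lambda)=\mathbf{x}^T(\lambda-L)^\vee\mathbf{e}$.
   Context: Fix $n\ge1$. On the open subset of $\mathbb{R}^{2n}$ with coordinates $(x_1,\dots,x_n,p_1,\dots,p_n)$ where the $x_i$ are pairwise distinct, let $L$ be the $n\times n$ matrix with $L_{ij}=p_i\delta_{ij}+(1-\delta_{ij})/(x_i-x_j)$ and $X=\mathrm{diag}(x_1,\dots,x_n)$. $A^\vee$ denotes the adjugate of a square matrix $A$. $\Delta(\lambda)=\det(\lambda\,\mathrm{Id}-L)$, $\Delta'(\lambda)=\frac{d}{d\lambda}\Delta(\lambda)$, $\mathbf{e}=(1,\dots,1)^T$, $\mathbf{x}=(x_1,\dots,x_n)^T$. $\{\cdot,\cdot\}_0$ is the canonical bracket with $\{p_i,x_j\}_0=\delta_{ij}$, $\{x_i,x_j\}_0=\{p_i,p_j\}_0=0$. *)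

theory Defs
  imports "HOL-Analysis.Analysis"
begin

definition Lmat :: "real^'n \<Rightarrow> real^'n \<Rightarrow> real^'n^'n" where
  "Lmat x p = (\<chi> i j. if i = j then p $ i else 1 / (x $ i - x $ j))"

definition Xmat :: "real^'n \<Rightarrow> real^'n^'n" where
  "Xmat x = (\<chi> i j. if i = j then x $ i else 0)"

text \<open>Adjugate: (adj A)_{ij} is the (j,i) cofactor of A, i.e. the determinant of A
  with row j replaced by the i-th standard basis vector.\<close>
definition adjugate :: "real^'n^'n \<Rightarrow> real^'n^'n" where
  "adjugate A = (\<chi> i j. det (\<chi> k. if k = j then axis i 1 else A $ k))"

definition Delta :: "real^'n \<Rightarrow> real^'n \<Rightarrow> real \<Rightarrow> real" where
  "Delta x p lam = det (mat lam - Lmat x p)"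

definition Delta' :: "real^'n \<Rightarrow> real^'n \<Rightarrow> real \<Rightarrow> real" where
  "Delta' x p lam = deriv (Delta x p) lam"

definition pd_x :: "'n \<Rightarrow> ((real^'n) \<times> (real^'n) \<Rightarrow> real) \<Rightarrow> (real^'n) \<times> (real^'n) \<Rightarrow> real" where
  "pd_x i f z = deriv (\<lambda>t. f (fst z + t *\<^sub>R axis i 1, snd z)) 0"

definition pd_p :: "'n \<Rightarrow> ((real^'n) \<times> (real^'n) \<Rightarrow> real) \<Rightarrow> (real^'n) \<times> (real^'n) \<Rightarrow> real" where
  "pd_p i f z = deriv (\<lambda>t. f (fst z, snd z + t *\<^sub>R axis i 1)) 0"

text \<open>Canonical bracket with {p_i, x_j}_0 = delta_ij.\<close>
definition bracket0 :: "((real^'n) \<times> (real^'n) \<Rightarrow> real) \<Rightarrow> ((real^'n) \<times> (real^'n) \<Rightarrow> real)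
    \<Rightarrow> (real^'n) \<times> (real^'n) \<Rightarrow> real" where
  "bracket0 f g z = (\<Sum>i\<in>UNIV. pd_p i f z * pd_x i g z - pd_x i f z * pd_p i g z)"

definition trL :: "(real^'n) \<times> (real^'n) \<Rightarrow> real" where
  "trL z = trace (Lmat (fst z) (snd z))"

definition calG :: "real \<Rightarrow> (real^'n) \<times> (real^'n) \<Rightarrow> real" where
  "calG lam z = trace (Xmat (fst z) ** adjugate (mat lam - Lmat (fst z) (snd z)))"

definition calE :: "real \<Rightarrow> (real^'n) \<times> (real^'n) \<Rightarrow> real" where
  "calE lam z = fst z \<bullet> (adjugate (mat lam - Lmat (fst z) (snd z)) *v vec 1)"

end

theory Submission
  imports Defs
begin

text \<open>Write \<open>M = \<lambda> - L\<close> and \<open>A = adj M\<close>. Since \<open>M A = A M = det M \<cdot> Id\<close>, we get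
  \<open>tr (X M A) = tr (M X A) = det M \<cdot> tr X\<close>, i.e. \<open>tr ([X, M] A) = 0\<close>. For the Calogero Lax
  matrix \<open>(x\<^sub>i - x\<^sub>k) L\<^sub>i\<^sub>k = 1\<close> off the diagonal, so \<open>[X, M] = Id - e e\<^sup>T\<close> and hence
  \<open>e\<^sup>T A e = tr A\<close>; Jacobi's formula gives \<open>\<Delta>' = tr A\<close>.
  The bracket \<open>{tr L, f}\<^sub>0 = \<Sum>\<^sub>i \<partial>f/\<partial>x\<^sub>i\<close> is the derivative of \<open>f\<close> along the translation
  \<open>x \<mapsto> x + t e\<close>. This translation leaves \<open>L\<close> unchanged, so \<open>G\<close> and \<open>E\<close> change linearly
  along it, with slopes \<open>tr A\<close> and \<open>e\<^sup>T A e\<close>.\<close>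

lemma adjugate_nth:
  fixes M :: "real^'n^'n"
  shows "adjugate M $ k $ i = (\<Sum>\<sigma> | \<sigma> permutes UNIV.
    of_int (sign \<sigma>) * (if \<sigma> i = k then \<Prod>r\<in>UNIV-{i}. M $ r $ \<sigma> r else 0))"
  unfolding adjugate_def det_def vec_lambda_beta
  by (intro sum.cong refl) (simp add: prod.remove[of _ i] axis_def)

lemma adjugate_row_expansion:
  fixes M :: "real^'n^'n"
  shows "(\<Sum>k\<in>UNIV. M $ i $ k * adjugate M $ k $ i) = det M"
proof -
  have "(\<Sum>k\<in>UNIV. M $ i $ k * adjugate M $ k $ i)
      = (\<Sum>\<sigma> | \<sigma> permutes UNIV. of_int (sign \<sigma>) *
           (\<Sum>k\<in>UNIV. if \<sigma> i = k then M $ i $ k * (\<Prod>r\<in>UNIV-{i}. M $ r $ \<sigma> r) else 0))"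
    unfolding adjugate_nth sum_distrib_left
    by (subst sum.swap) (auto intro!: sum.cong)
  also have "\<dots> = det M"
    unfolding det_def by (intro sum.cong refl) (simp add: prod.remove[of _ i])
  finally show ?thesis .
qed

lemma adjugate_column_expansion:
  fixes M :: "real^'n^'n"
  shows "(\<Sum>i\<in>UNIV. adjugate M $ k $ i * M $ i $ k) = det M"
proof -
  have "(\<Sum>i\<in>UNIV. adjugate M $ k $ i * M $ i $ k)
      = (\<Sum>\<sigma> | \<sigma> permutes UNIV. of_int (sign \<sigma>) *
           (\<Sum>i\<in>UNIV. if i = inv \<sigma> k then \<Prod>r\<in>UNIV. M $ r $ \<sigma> r else 0))"
    unfolding adjugate_nth sum_distrib_left sum_distrib_right
  proof (subst sum.swap, intro sum.cong refl)
    fix \<sigma> :: "'n \<Rightarrow> 'n" and i assume "\<sigma> \<in> {\<sigma>. \<sigma> permutes UNIV}"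
    then have "\<sigma> permutes UNIV" by simp
    then have "\<sigma> i = k \<longleftrightarrow> i = inv \<sigma> k"
      by (metis permutes_inverses(1) permutes_inverses(2))
    then show "of_int (sign \<sigma>) * (if \<sigma> i = k then \<Prod>r\<in>UNIV-{i}. M $ r $ \<sigma> r else 0) * M $ i $ k
        = of_int (sign \<sigma>) * (if i = inv \<sigma> k then \<Prod>r\<in>UNIV. M $ r $ \<sigma> r else 0)"
      by (auto simp: prod.remove[of _ i])
  qed
  also have "\<dots> = det M"
    unfolding det_def by simp
  finally show ?thesis .
qed

lemma diagonal_commutator_adjugate_trace_eq_0:
  fixes M :: "real^'n^'n" and x :: "real^'n"
  shows "(\<Sum>i\<in>UNIV. \<Sum>k\<in>UNIV. (x $ i - x $ k) * M $ i $ k * adjugate M $ k $ i) = 0"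
proof -
  have "(\<Sum>i\<in>UNIV. \<Sum>k\<in>UNIV. (x $ i - x $ k) * M $ i $ k * adjugate M $ k $ i)
      = (\<Sum>i\<in>UNIV. \<Sum>k\<in>UNIV. x $ i * (M $ i $ k * adjugate M $ k $ i))
        - (\<Sum>i\<in>UNIV. \<Sum>k\<in>UNIV. x $ k * (adjugate M $ k $ i * M $ i $ k))"
    unfolding sum_subtractf[symmetric] by (intro sum.cong refl) (simp add: algebra_simps)
  also have "\<dots> = (\<Sum>i\<in>UNIV. x $ i * (\<Sum>k\<in>UNIV. M $ i $ k * adjugate M $ k $ i))
        - (\<Sum>k\<in>UNIV. x $ k * (\<Sum>i\<in>UNIV. adjugate M $ k $ i * M $ i $ k))"
    unfolding sum_distrib_left by (subst (2) sum.swap) (rule refl)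
  finally show ?thesis
    by (simp add: adjugate_row_expansion adjugate_column_expansion)
qed

lemma det_has_field_derivative:
  fixes A :: "real \<Rightarrow> real^'n^'n"
  assumes "\<And>r c. ((\<lambda>s. A s $ r $ c) has_field_derivative A' $ r $ c) (at t)"
  shows "((\<lambda>s. det (A s)) has_field_derivative trace (adjugate (A t) ** A')) (at t)"
proof -
  have "((\<lambda>s. det (A s)) has_field_derivative (\<Sum>\<sigma> | \<sigma> permutes UNIV. of_int (sign \<sigma>) *
      (\<Sum>c\<in>UNIV. A' $ c $ \<sigma> c * (\<Prod>r\<in>UNIV-{c}. A t $ r $ \<sigma> r)))) (at t)"
    unfolding det_def by (intro DERIV_sum DERIV_cmult has_field_derivative_prod assms)
  moreover have "(\<Sum>j\<in>UNIV. adjugate (A t) $ j $ c * A' $ c $ j) = (\<Sum>\<sigma> | \<sigma> permutes UNIV.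
      of_int (sign \<sigma>) * (A' $ c $ \<sigma> c * (\<Prod>r\<in>UNIV-{c}. A t $ r $ \<sigma> r)))" for c
    unfolding adjugate_nth sum_distrib_right
    by (subst sum.swap) (simp add: if_distrib if_distribR mult_ac cong: if_cong)
  then have "trace (adjugate (A t) ** A') = (\<Sum>\<sigma> | \<sigma> permutes UNIV. of_int (sign \<sigma>) *
      (\<Sum>c\<in>UNIV. A' $ c $ \<sigma> c * (\<Prod>r\<in>UNIV-{c}. A t $ r $ \<sigma> r)))"
    unfolding trace_def matrix_matrix_mult_def vec_lambda_beta sum_distrib_left
    by (subst sum.swap) (simp add: sum.swap[of _ UNIV "{\<sigma>. \<sigma> permutes UNIV}"])
  ultimately show ?thesis by simp
qed

lemma differentiable_prod [derivative_intros]: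
  fixes f :: "'i \<Rightarrow> 'a::real_normed_vector \<Rightarrow> 'b::real_normed_field"
  assumes "\<And>i. i \<in> I \<Longrightarrow> f i differentiable (at x within S)"
  shows "(\<lambda>x. \<Prod>i\<in>I. f i x) differentiable (at x within S)"
proof -
  from assms obtain f' where "\<And>i. i \<in> I \<Longrightarrow> (f i has_derivative f' i) (at x within S)"
    unfolding differentiable_def by metis
  then show ?thesis
    unfolding differentiable_def by (blast intro: has_derivative_prod)
qed

lemma adjugate_nth_differentiable:
  fixes A :: "'a::real_normed_vector \<Rightarrow> real^'n^'n"
  assumes "\<And>r c. (\<lambda>y. A y $ r $ c) differentiable (at x)"
  shows "(\<lambda>y. adjugate (A y) $ k $ i) differentiable (at x)"
proof -
  have "(\<lambda>y. if \<sigma> i = k then \<Prod>r\<in>UNIV-{i}. A y $ r $ \<sigma> r else 0) differentiable (at x)"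
    for \<sigma> :: "'n \<Rightarrow> 'n"
    by (cases "\<sigma> i = k") (simp_all add: differentiable_prod assms)
  then show ?thesis
    unfolding adjugate_nth by simp
qed

lemmas differentiable_vec_nth [derivative_intros] =
  bounded_linear_imp_differentiable[OF bounded_linear_vec_nth]

lemma has_real_derivative_along_line:
  fixes f :: "'a::real_normed_vector \<Rightarrow> real"
  assumes "(f has_derivative D) (at x)"
  shows "((\<lambda>t. f (x + t *\<^sub>R v)) has_real_derivative D v) (at 0)"
proof -
  have "((\<lambda>t::real. x + t *\<^sub>R v) has_derivative (\<lambda>t. t *\<^sub>R v)) (at 0)"
    by (auto intro!: derivative_eq_intros)
  from has_derivative_compose[OF this] assms
  have "((\<lambda>t. f (x + t *\<^sub>R v)) has_derivative (\<lambda>t. D (t *\<^sub>R v))) (at 0)"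
    by simp
  moreover have "(\<lambda>t. D (t *\<^sub>R v)) = (\<lambda>t. D v * t)"
    using linear_scale[OF has_derivative_linear[OF assms]] by (auto simp: mult.commute)
  ultimately show ?thesis
    unfolding has_field_derivative_def by simp
qed

lemma Lmat_commutator_entry:
  assumes "inj (\<lambda>i. x $ i)"
  shows "(x $ i - x $ k) * (mat lam - Lmat x p) $ i $ k = (if i = k then 0 else -1)"
  using injD[OF assms, of i k] by (simp add: Lmat_def mat_def)

lemma sum_adjugate_entries_eq_trace:
  fixes x p :: "real^'n"
  assumes "inj (\<lambda>i. x $ i)"
  shows "vec 1 \<bullet> (adjugate (mat lam - Lmat x p) *v vec 1) = trace (adjugate (mat lam - Lmat x p))"
proof -
  define a where "a = adjugate (mat lam - Lmat x p)"
  have "0 = (\<Sum>i\<in>UNIV. \<Sum>k\<in>UNIV. (x $ i - x $ k) * (mat lam - Lmat x p) $ i $ k * a $ k $ i)"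
    unfolding a_def by (rule diagonal_commutator_adjugate_trace_eq_0[symmetric])
  also have "\<dots> = (\<Sum>i\<in>UNIV. \<Sum>k\<in>UNIV. (if i = k then a $ k $ i else 0) - a $ k $ i)"
    unfolding Lmat_commutator_entry[OF assms] by (intro sum.cong refl) simp
  also have "\<dots> = trace a - (\<Sum>i\<in>UNIV. \<Sum>k\<in>UNIV. a $ k $ i)"
    by (simp add: sum_subtractf trace_def)
  finally have "trace a = (\<Sum>i\<in>UNIV. \<Sum>k\<in>UNIV. a $ k $ i)"
    by simp
  also have "\<dots> = (\<Sum>k\<in>UNIV. \<Sum>i\<in>UNIV. a $ k $ i)"
    by (rule sum.swap)
  also have "\<dots> = vec 1 \<bullet> (a *v vec 1)"
    by (simp add: inner_vec_def matrix_vector_mult_def)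
  finally show ?thesis
    unfolding a_def by simp
qed

lemma Delta'_eq_trace_adjugate: "Delta' x p lam = trace (adjugate (mat lam - Lmat x p))"
proof -
  have "((\<lambda>s. (mat s - Lmat x p) $ r $ c) has_field_derivative mat 1 $ r $ c) (at lam)" for r c
    by (auto simp: mat_def intro!: derivative_eq_intros)
  from det_has_field_derivative[OF this] show ?thesis
    unfolding Delta'_def Delta_def by (simp add: DERIV_imp_deriv)
qed

lemma Lmat_translate: "Lmat (x + t *\<^sub>R vec 1) p = Lmat x p"
  by (simp add: Lmat_def vec_eq_iff)

lemma Lmat_nth_differentiable:
  assumes "inj (\<lambda>i. x $ i)"
  shows "(\<lambda>y. (mat lam - Lmat y p) $ r $ c) differentiable (at x)"
proof (cases "r = c")
  case False
  with assms have "x $ r - x $ c \<noteq> 0"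
    by (auto dest: injD)
  with False show ?thesis
    by (simp add: Lmat_def mat_def differentiable_vec_nth)
qed (simp add: Lmat_def mat_def)

lemma trace_Xmat_mult: "trace (Xmat y ** A) = (\<Sum>i\<in>UNIV. y $ i * A $ i $ i)"
  by (simp add: trace_def matrix_matrix_mult_def Xmat_def if_distrib if_distribR cong: if_cong)

lemma calG_translate:
  "calG lam (x + t *\<^sub>R vec 1, p) = calG lam (x, p) + t * trace (adjugate (mat lam - Lmat x p))"
  unfolding calG_def fst_conv snd_conv Lmat_translate trace_Xmat_mult
  by (simp add: trace_def algebra_simps sum.distrib sum_distrib_left)

lemma calE_translate:
  "calE lam (x + t *\<^sub>R vec 1, p)
    = calE lam (x, p) + t * (vec 1 \<bullet> (adjugate (mat lam - Lmat x p) *v vec 1))"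
  unfolding calE_def fst_conv snd_conv Lmat_translate by (simp add: inner_add_left)

lemma trL_eq_sum: "trL z = (\<Sum>i\<in>UNIV. snd z $ i)"
  by (simp add: trL_def trace_def Lmat_def)

lemma bracket0_trL: "bracket0 trL g z = (\<Sum>i\<in>UNIV. pd_x i g z)"
proof -
  have "pd_x i trL z = 0" for i
    unfolding pd_x_def trL_eq_sum by simp
  moreover have "pd_p i trL z = 1" for i
  proof -
    have "(\<lambda>t. trL (fst z, snd z + t *\<^sub>R axis i 1)) = (\<lambda>t. trL z + t)"
      by (rule ext) (simp add: trL_eq_sum sum.distrib axis_def sum_distrib_left[symmetric])
    then show ?thesis
      unfolding pd_p_def by simp
  qed
  ultimately show ?thesis
    unfolding bracket0_def by simp
qed

lemma bracket0_trL_eq_rate_along_diagonal: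
  fixes g :: "(real^'n) \<times> (real^'n) \<Rightarrow> real"
  assumes "(\<lambda>y. g (y, p)) differentiable (at x)"
    and "\<And>t. g (x + t *\<^sub>R vec 1, p) = g (x, p) + t * c"
  shows "bracket0 trL g (x, p) = c"
proof -
  obtain D where D: "((\<lambda>y. g (y, p)) has_derivative D) (at x)"
    using assms(1) unfolding differentiable_def by blast
  have "pd_x i g (x, p) = D (axis i 1)" for i
    unfolding pd_x_def using has_real_derivative_along_line[OF D] by (simp add: DERIV_imp_deriv)
  then have "bracket0 trL g (x, p) = D (\<Sum>i\<in>UNIV. axis i 1)"
    unfolding bracket0_trL by (simp add: linear_sum[OF has_derivative_linear[OF D]])
  also have "(\<Sum>i\<in>UNIV. axis i 1) = (vec 1 :: real^'n)"
    by (simp add: vec_eq_iff axis_def)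
  also have "D (vec 1) = c"
  proof (rule DERIV_unique[OF has_real_derivative_along_line[OF D]])
    show "((\<lambda>t. g (x + t *\<^sub>R vec 1, p)) has_real_derivative c) (at 0)"
      unfolding assms(2) by (auto intro!: derivative_eq_intros)
  qed
  finally show ?thesis .
qed

theorem mainTheorem7:
  fixes x p :: "real^'n" and lam :: real
  assumes "inj (\<lambda>i. x $ i)"
  shows "(vec 1 \<bullet> (adjugate (mat lam - Lmat x p) *v vec 1) = trace (adjugate (mat lam - Lmat x p)))
    \<and> (trace (adjugate (mat lam - Lmat x p)) = Delta' x p lam)
    \<and> (bracket0 trL (calG lam) (x, p) = Delta' x p lam)
    \<and> (bracket0 trL (calE lam) (x, p) = Delta' x p lam)"
proof -
  have adj: "(\<lambda>y. adjugate (mat lam - Lmat y p) $ k $ i) differentiable (at x)" for k i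
    by (intro adjugate_nth_differentiable Lmat_nth_differentiable assms)
  have "bracket0 trL (calG lam) (x, p) = trace (adjugate (mat lam - Lmat x p))"
    by (rule bracket0_trL_eq_rate_along_diagonal[OF _ calG_translate])
      (simp add: calG_def trace_Xmat_mult adj differentiable_vec_nth)
  moreover have "bracket0 trL (calE lam) (x, p) = vec 1 \<bullet> (adjugate (mat lam - Lmat x p) *v vec 1)"
    by (rule bracket0_trL_eq_rate_along_diagonal[OF _ calE_translate])
      (simp add: calE_def inner_vec_def matrix_vector_mult_def adj differentiable_vec_nth)
  ultimately show ?thesis
    using sum_adjugate_entries_eq_trace[OF assms] by (simp add: Delta'_eq_trace_adjugate)
qed

end
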